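(* Let $T$ be a rooted binary tree with black/white-coloured leaves and the induced node colouring and classification as described in the context, and suppose $T$ contains more than one maximal black subtree. Then no SPR operation on $T$ belonging to the class $(\mathrm{G},\ast,\ast,\ast)$ (i.e. pruning a grey node) produces a compatible tree.
   Context: All trees are rooted binary trees; every non-leaf node has exactly two children and every non-root node $n$ has a parent $\mathrm{pa}(n)$. A "subtree" always means a node together with all of its descendants. Colouring: each leaf is coloured black (B) or white (W); an internal node is black if both children are black, white if both children are white, and grey (G) otherwise. A subtree is black (resp. white) if all its nodes are black (resp. white); it is maximal if no strictly larger subtree containing it is black (resp. white). Classification: a black or white node is of type "r" if it is the root of a maximal subtree of its own colour, and of type "b" otherwise; all grey nodes are of type "b" by convention. A tree is compatible if it contains at most one maximal black subtree. SPR operation $(u,v)$ on $T$: $u$ is a non-root node, $v$ is a node with $v\notin\{u,\mathrm{pa}(u)\}$ and $v$ not a descendant of $u$; the subtree rooted at $u$ is pruned (the edge to $u$ is removed and $\mathrm{pa}(u)$ deleted, its other child taking its place), then regrafted by inserting a new node on the edge from $v$ to its parent (or as a new root above $v$ if $v$ is the root) whose two children are $v$ and $u$; colours of the resulting tree are recomputed by the same rule. The operation belongs to class $(x,y,z,w)$ where $x,z\in\{\mathrm{B},\mathrm{W},\mathrm{G}\}$ are the colours in $T$ of $u$ and $v$, and $y,w\in\{\mathrm{r},\mathrm{b}\}$ their classifications in $T$; $\ast$ denotes any value. *)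

theory Defs
  imports Main
begin

(* Nodes are addressed by positions: lists of
   booleans (False = left child, True = right child), the root being [].
   The parent of a non-root position p is butlast p; q is a descendant of p
   iff p is a prefix of q. *)

datatype leafcol = LB | LW

datatype tree = Leaf leafcol | Node tree tree

datatype colour = B | W | G

fun col :: "tree \<Rightarrow> colour" where
  "col (Leaf LB) = B"
| "col (Leaf LW) = W"
| "col (Node l r) =
     (if col l = B \<and> col r = B then B
      else if col l = W \<and> col r = W then W else G)"

fun positions :: "tree \<Rightarrow> bool list set" where
  "positions (Leaf c) = {[]}"
| "positions (Node l r) =
     insert [] ((Cons False) ` positions l \<union> (Cons True) ` positions r)"

fun subt :: "tree \<Rightarrow> bool list \<Rightarrow> tree" where
  "subt t [] = t"
| "subt (Node l r) (False # p) = subt l p"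
| "subt (Node l r) (True # p) = subt r p"
| "subt (Leaf c) (b # p) = Leaf c"

fun repl :: "tree \<Rightarrow> bool list \<Rightarrow> tree \<Rightarrow> tree" where
  "repl t [] s = s"
| "repl (Node l r) (False # p) s = Node (repl l p s) r"
| "repl (Node l r) (True # p) s = Node l (repl r p s)"
| "repl (Leaf c) (b # p) s = Leaf c"

definition node_col :: "tree \<Rightarrow> bool list \<Rightarrow> colour" where
  "node_col T p = col (subt T p)"

definition strict_anc :: "bool list \<Rightarrow> bool list \<Rightarrow> bool" where
  "strict_anc q p \<longleftrightarrow> (\<exists>w. w \<noteq> [] \<and> p = q @ w)"

definition black_subtree :: "tree \<Rightarrow> bool list \<Rightarrow> bool" where
  "black_subtree T p \<longleftrightarrow> p \<in> positions T \<and>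
     (\<forall>w. p @ w \<in> positions T \<longrightarrow> node_col T (p @ w) = B)"

definition max_black_roots :: "tree \<Rightarrow> bool list set" where
  "max_black_roots T = {p. black_subtree T p \<and>
      \<not> (\<exists>q. strict_anc q p \<and> black_subtree T q)}"

definition compatible :: "tree \<Rightarrow> bool" where
  "compatible T \<longleftrightarrow> card (max_black_roots T) \<le> 1"

definition valid_spr :: "tree \<Rightarrow> bool list \<Rightarrow> bool list \<Rightarrow> bool" where
  "valid_spr T u v \<longleftrightarrow> u \<in> positions T \<and> u \<noteq> [] \<and> v \<in> positions T \<and>
     v \<noteq> butlast u \<and> \<not> (\<exists>w. v = u @ w)"

(* SPR (u,v): prune the subtree at u (pa(u) is replaced by the sibling of u),
   then regraft it on the edge above (the new position of) v. *)
definition spr :: "tree \<Rightarrow> bool list \<Rightarrow> bool list \<Rightarrow> tree" where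
  "spr T u v =
     (let a = butlast u;
          s = a @ [\<not> last u];
          T' = repl T a (subt T s);
          v' = (if take (length s) v = s then a @ drop (length s) v else v)
      in repl T' v' (Node (subt T' v') (subt T u)))"

end

theory Submission
  imports Defs
begin

(* Regrafting a grey subtree g makes every ancestor of the graft point grey, so no two black
   subtrees are merged: the result has at least as many maximal black subtrees as the pruned
   tree T' and g together.  Being grey, g contains a black leaf, hence a maximal black subtree;
   if T' also has a black leaf we get two.  Otherwise every black leaf of T lies in g, and g
   alone carries all the maximal black subtrees of T, of which there are more than one. *)

fun has_black_leaf :: "tree \<Rightarrow> bool" where
  "has_black_leaf (Leaf c) = (c = LB)"
| "has_black_leaf (Node l r) = (has_black_leaf l \<or> has_black_leaf r)"

fun max_black_count :: "tree \<Rightarrow> nat" where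
  "max_black_count (Leaf c) = (if c = LB then 1 else 0)"
| "max_black_count (Node l r) =
     (if col (Node l r) = B then 1 else max_black_count l + max_black_count r)"

lemma has_black_leaf_if_col_not_W: "col t \<noteq> W \<Longrightarrow> has_black_leaf t"
  by (induction t rule: col.induct) (auto split: if_splits)

lemma max_black_count_pos_iff: "0 < max_black_count t \<longleftrightarrow> has_black_leaf t"
  by (induction t) (auto dest: has_black_leaf_if_col_not_W)

lemma max_black_count_Node_le:
  "max_black_count (Node l r) \<le> max_black_count l + max_black_count r"
  using max_black_count_pos_iff[of l] max_black_count_pos_iff[of r]
  by (auto simp: has_black_leaf_if_col_not_W split: if_splits)

lemma subt_Leaf [simp]: "subt (Leaf c) p = Leaf c"
  by (cases p) auto

lemma Nil_in_positions [simp]: "[] \<in> positions t"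
  by (cases t) auto

lemma subt_append: "subt T (p @ w) = subt (subt T p) w"
  by (induction T p rule: subt.induct) auto

lemma append_in_positions_iff:
  "p @ w \<in> positions T \<longleftrightarrow> p \<in> positions T \<and> w \<in> positions (subt T p)"
  by (induction T p rule: subt.induct) auto

lemma col_subt_B: "col t = B \<Longrightarrow> p \<in> positions t \<Longrightarrow> col (subt t p) = B"
  by (induction t arbitrary: p) (auto split: if_splits)

lemma black_subtree_iff: "black_subtree T p \<longleftrightarrow> p \<in> positions T \<and> col (subt T p) = B"
  unfolding black_subtree_def node_col_def
  by (metis append_Nil2 append_in_positions_iff col_subt_B subt_append)

lemma not_strict_anc_Nil: "\<not> strict_anc q []"
  unfolding strict_anc_def by simp

lemma strict_anc_Cons:
  "strict_anc q (b # p) \<longleftrightarrow> q = [] \<or> (\<exists>q'. q = b # q' \<and> strict_anc q' p)"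
  unfolding strict_anc_def by (cases q) auto

lemma max_black_roots_iff:
  "p \<in> max_black_roots T \<longleftrightarrow> p \<in> positions T \<and> col (subt T p) = B \<and>
     (\<forall>q. strict_anc q p \<longrightarrow> \<not> (q \<in> positions T \<and> col (subt T q) = B))"
  unfolding max_black_roots_def black_subtree_iff by auto

lemma max_black_roots_Leaf: "max_black_roots (Leaf c) = (if c = LB then {[]} else {})"
  by (cases c) (auto simp: max_black_roots_iff not_strict_anc_Nil)

lemma max_black_roots_Node:
  "max_black_roots (Node l r) =
     (if col (Node l r) = B then {[]}
      else Cons False ` max_black_roots l \<union> Cons True ` max_black_roots r)"
proof (cases "col (Node l r) = B")
  case True
  have "b # p \<notin> max_black_roots (Node l r)" for b p
    using True by (auto simp: max_black_roots_iff strict_anc_Cons simp del: col.simps)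
  moreover have "[] \<in> max_black_roots (Node l r)"
    using True by (simp add: max_black_roots_iff not_strict_anc_Nil del: col.simps)
  ultimately have "p \<in> max_black_roots (Node l r) \<longleftrightarrow> p = []" for p
    by (cases p) auto
  then show ?thesis
    using True by auto
next
  case False
  have "b # p \<in> max_black_roots (Node l r) \<longleftrightarrow>
          p \<in> max_black_roots (if b then r else l)" for b p
    using False by (cases b) (auto simp: max_black_roots_iff strict_anc_Cons)
  moreover have "[] \<notin> max_black_roots (Node l r)"
    using False by (simp add: max_black_roots_iff del: col.simps)
  ultimately have "p \<in> max_black_roots (Node l r) \<longleftrightarrow>
      p \<in> Cons False ` max_black_roots l \<union> Cons True ` max_black_roots r" for p
    by (cases p) (auto split: if_splits)
  then show ?thesis
    using False by auto
qed

lemma finite_max_black_roots: "finite (max_black_roots T)"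
  by (induction T) (auto simp: max_black_roots_Leaf max_black_roots_Node)

lemma card_max_black_roots: "card (max_black_roots T) = max_black_count T"
proof (induction T)
  case (Leaf c)
  then show ?case by (simp add: max_black_roots_Leaf)
next
  case (Node l r)
  have "card (Cons False ` max_black_roots l \<union> Cons True ` max_black_roots r)
      = card (max_black_roots l) + card (max_black_roots r)"
    by (subst card_Un_disjoint) (auto simp: finite_max_black_roots card_image)
  then show ?case
    using Node.IH by (simp add: max_black_roots_Node del: col.simps)
qed

lemma subt_repl: "a \<in> positions T \<Longrightarrow> subt (repl T a x) a = x"
  by (induction T a x rule: repl.induct) auto

lemma append_in_positions_repl:
  "a \<in> positions T \<Longrightarrow> w \<in> positions x \<Longrightarrow> a @ w \<in> positions (repl T a x)"
  by (induction T a x rule: repl.induct) auto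

lemma in_positions_repl:
  "p \<in> positions T \<Longrightarrow> \<not> strict_anc a p \<Longrightarrow> p \<in> positions (repl T a x)"
proof (induction T a x arbitrary: p rule: repl.induct)
  case (2 l r a x)
  then show ?case by (cases p) (auto simp: strict_anc_Cons)
next
  case (3 l r a x)
  then show ?case by (cases p) (auto simp: strict_anc_Cons)
qed (auto simp: strict_anc_def)

lemma has_black_leaf_subt:
  "a \<in> positions T \<Longrightarrow> has_black_leaf (subt T a) \<Longrightarrow> has_black_leaf T"
  by (induction T a rule: subt.induct) auto

lemma col_graft_grey:
  "v \<in> positions T \<Longrightarrow> col g = G \<Longrightarrow> col (repl T v (Node (subt T v) g)) = G"
  by (induction T v "Node (subt T v) g" rule: repl.induct) auto

lemma max_black_count_graft_grey:
  "v \<in> positions T \<Longrightarrow> col g = G \<Longrightarrow>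
     max_black_count T + max_black_count g \<le> max_black_count (repl T v (Node (subt T v) g))"
proof (induction T v "Node (subt T v) g" rule: repl.induct)
  case (2 l r p)
  then show ?case using max_black_count_Node_le[of l r] col_graft_grey[of p l g] by auto
next
  case (3 l r p)
  then show ?case using max_black_count_Node_le[of l r] col_graft_grey[of p r g] by auto
qed auto

lemma max_black_count_eq_subt_if_repl_no_black:
  "a \<in> positions T \<Longrightarrow> \<not> has_black_leaf (repl T a x) \<Longrightarrow>
     max_black_count T = max_black_count (subt T a)"
proof (induction T a x rule: repl.induct)
  case (2 l r p s)
  then show ?case using max_black_count_pos_iff[of r] has_black_leaf_if_col_not_W[of r] by auto
next
  case (3 l r p s)
  then show ?case using max_black_count_pos_iff[of l] has_black_leaf_if_col_not_W[of l] by auto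
qed auto

definition sibling :: "bool list \<Rightarrow> bool list" where
  "sibling u = butlast u @ [\<not> last u]"

lemma subt_parent:
  assumes "u \<in> positions T" and "u \<noteq> []"
  obtains l r where "subt T (butlast u) = Node l r"
    and "subt T u = (if last u then r else l)"
    and "subt T (sibling u) = (if last u then l else r)"
    and "butlast u \<in> positions T" and "sibling u \<in> positions T"
proof -
  have u: "u = butlast u @ [last u]"
    using assms(2) by simp
  then have a: "butlast u \<in> positions T" and "[last u] \<in> positions (subt T (butlast u))"
    using assms(1) append_in_positions_iff by metis+
  then obtain l r where lr: "subt T (butlast u) = Node l r"
    by (cases "subt T (butlast u)") auto
  have "subt T u = (if last u then r else l)"
    using lr subt_append[of T "butlast u" "[last u]"] u by (cases "last u") simp_all
  moreover have "subt T (sibling u) = (if last u then l else r)"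
    using lr subt_append[of T "butlast u" "[\<not> last u]"] unfolding sibling_def
    by (cases "last u") simp_all
  moreover have "sibling u \<in> positions T"
    using lr a append_in_positions_iff[of "butlast u" "[\<not> last u]" T] unfolding sibling_def
    by (cases "last u") auto
  ultimately show thesis
    using that lr a by blast
qed

definition prune :: "tree \<Rightarrow> bool list \<Rightarrow> tree" where
  "prune T u = repl T (butlast u) (subt T (sibling u))"

definition pruned_pos :: "bool list \<Rightarrow> bool list \<Rightarrow> bool list" where
  "pruned_pos u v =
     (if take (length (sibling u)) v = sibling u then butlast u @ drop (length (sibling u)) v else v)"

lemma spr_eq_graft_prune:
  "spr T u v = repl (prune T u) (pruned_pos u v)
     (Node (subt (prune T u) (pruned_pos u v)) (subt T u))"
  unfolding spr_def prune_def pruned_pos_def sibling_def Let_def ..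

lemma pruned_pos_in_positions_prune:
  assumes u: "u \<in> positions T" "u \<noteq> []"
    and v: "v \<in> positions T" "\<not> (\<exists>w. v = u @ w)"
  shows "pruned_pos u v \<in> positions (prune T u)"
proof -
  have u_eq: "u = butlast u @ [last u]"
    using u(2) by simp
  obtain "butlast u \<in> positions T" "sibling u \<in> positions T"
    using subt_parent[OF u] by metis
  show ?thesis
  proof (cases "take (length (sibling u)) v = sibling u")
    case True
    then have "v = sibling u @ drop (length (sibling u)) v"
      by (metis append_take_drop_id)
    then have "drop (length (sibling u)) v \<in> positions (subt T (sibling u))"
      using v(1) append_in_positions_iff by metis
    then show ?thesis
      using True \<open>butlast u \<in> positions T\<close>
      by (simp add: pruned_pos_def prune_def append_in_positions_repl)
  next
    case False
    have "\<not> strict_anc (butlast u) v"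
    proof
      assume "strict_anc (butlast u) v"
      then obtain c w where "v = (butlast u @ [c]) @ w"
        unfolding strict_anc_def by (metis neq_Nil_conv append_Cons append_assoc append_Nil)
      then show False
        using u_eq v(2) False by (cases "c = last u") (auto simp: sibling_def)
    qed
    then show ?thesis
      using False v(1) by (simp add: pruned_pos_def prune_def in_positions_repl)
  qed
qed

lemma max_black_count_prune_no_black:
  assumes "u \<in> positions T" and "u \<noteq> []" and "col (subt T u) = G"
    and "\<not> has_black_leaf (prune T u)"
  shows "max_black_count T = max_black_count (subt T u)"
proof -
  obtain l r where lr: "subt T (butlast u) = Node l r"
    and u: "subt T u = (if last u then r else l)"
    and s: "subt T (sibling u) = (if last u then l else r)"
    and pos: "butlast u \<in> positions T"
    using subt_parent[OF assms(1,2)] by metis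
  have "max_black_count T = max_black_count (Node l r)"
    using max_black_count_eq_subt_if_repl_no_black[OF pos] assms(4) lr unfolding prune_def by simp
  moreover have "\<not> has_black_leaf (subt T (sibling u))"
  proof -
    have "butlast u \<in> positions (prune T u)"
      using pos in_positions_repl unfolding prune_def strict_anc_def by simp
    then show ?thesis
      using assms(4) has_black_leaf_subt subt_repl[OF pos] unfolding prune_def by metis
  qed
  ultimately show ?thesis
    using assms(3) u s max_black_count_pos_iff by (cases "last u") auto
qed

theorem lemma5:
  fixes T :: tree and u v :: "bool list"
  assumes "card (max_black_roots T) > 1"
    and "valid_spr T u v"
    and "node_col T u = G"
  shows "\<not> compatible (spr T u v)"
proof -
  have u: "u \<in> positions T" "u \<noteq> []"
    and v: "v \<in> positions T" "\<not> (\<exists>w. v = u @ w)"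
    and g: "col (subt T u) = G"
    using assms(2,3) unfolding valid_spr_def node_col_def by auto
  have graft: "max_black_count (prune T u) + max_black_count (subt T u)
      \<le> max_black_count (spr T u v)"
    unfolding spr_eq_graft_prune
    using max_black_count_graft_grey[OF pruned_pos_in_positions_prune[OF u v] g] .
  have "0 < max_black_count (subt T u)"
    using g has_black_leaf_if_col_not_W max_black_count_pos_iff by simp
  moreover have "1 < max_black_count T"
    using assms(1) card_max_black_roots by simp
  ultimately have "1 < max_black_count (spr T u v)"
    using graft max_black_count_prune_no_black[OF u g] max_black_count_pos_iff[of "prune T u"]
    by (cases "has_black_leaf (prune T u)") auto
  then show ?thesis
    unfolding compatible_def card_max_black_roots by simp
qed

end
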